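(* Let $n\geq 5$ be an odd integer. Then $\beta_3(J_n)=3n$.
   Context: Flower snark $J_n$ ($n\geq 5$ odd): take $n$ disjoint stars $K_{1,3}$, the $i$th with vertices $T_i=\{a_i,b_i,c_i,d_i\}$, centre $b_i$ and leaves $a_i,c_i,d_i$; add the cycle $a_1a_2\cdots a_na_1$ and the cycle $c_1c_2\cdots c_nd_1d_2\cdots d_nc_1$. $d$ is the shortest-path distance, $d(s,X)=\min_{x\in X}d(s,x)$ for nonempty $X$, $\mathcal{D}_S(X)=(d(s_1,X),\dots,d(s_k,X))$. $S$ is a $\{3\}$-resolving set if $\mathcal{D}_S(X)\neq\mathcal{D}_S(Y)$ for all distinct nonempty vertex sets $X,Y$ with $|X|,|Y|\leq 3$; $\beta_3(J_n)$ is the minimum size of such a set. *)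

theory Defs
  imports Main
begin

text \<open>Flower snark J_n. Vertex (i,k) with i < n (0-based index of the star)
 and k = 0,1,2,3 standing for a_i, b_i, c_i, d_i respectively.\<close>

definition fs_verts :: "nat \<Rightarrow> (nat \<times> nat) set" where
  "fs_verts n = {0..<n} \<times> {0..<4}"

definition fs_arc :: "nat \<Rightarrow> nat \<times> nat \<Rightarrow> nat \<times> nat \<Rightarrow> bool" where
  "fs_arc n u v \<longleftrightarrow>
     (\<exists>i<n.
        (u = (i,1) \<and> v = (i,0)) \<or> (u = (i,1) \<and> v = (i,2)) \<or> (u = (i,1) \<and> v = (i,3))
      \<or> (u = (i,0) \<and> v = ((i+1) mod n, 0))
      \<or> (i + 1 < n \<and> u = (i,2) \<and> v = (i+1,2))
      \<or> (i + 1 < n \<and> u = (i,3) \<and> v = (i+1,3))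
      \<or> (i + 1 = n \<and> u = (i,2) \<and> v = (0,3))
      \<or> (i + 1 = n \<and> u = (i,3) \<and> v = (0,2)))"

definition fs_adj :: "nat \<Rightarrow> nat \<times> nat \<Rightarrow> nat \<times> nat \<Rightarrow> bool" where
  "fs_adj n u v \<longleftrightarrow> fs_arc n u v \<or> fs_arc n v u"

definition fs_dist :: "nat \<Rightarrow> nat \<times> nat \<Rightarrow> nat \<times> nat \<Rightarrow> nat" where
  "fs_dist n u v = (LEAST k. (fs_adj n ^^ k) u v)"

definition fs_setdist :: "nat \<Rightarrow> nat \<times> nat \<Rightarrow> (nat \<times> nat) set \<Rightarrow> nat" where
  "fs_setdist n s X = Min ((\<lambda>x. fs_dist n s x) ` X)"

definition three_resolving :: "nat \<Rightarrow> (nat \<times> nat) set \<Rightarrow> bool" where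
  "three_resolving n S \<longleftrightarrow> S \<subseteq> fs_verts n \<and>
     (\<forall>X Y. X \<subseteq> fs_verts n \<longrightarrow> Y \<subseteq> fs_verts n \<longrightarrow> X \<noteq> {} \<longrightarrow> Y \<noteq> {} \<longrightarrow>
        card X \<le> 3 \<longrightarrow> card Y \<le> 3 \<longrightarrow> X \<noteq> Y \<longrightarrow>
        (\<exists>s\<in>S. fs_setdist n s X \<noteq> fs_setdist n s Y))"

definition beta3 :: "nat \<Rightarrow> nat" where
  "beta3 n = (LEAST k. \<exists>S. three_resolving n S \<and> card S = k)"

end

theory Submission
  imports Defs
begin

(* Only the centres b_i can be left out of a {3}-resolving set.  The set of all leaves a_i, c_i, d_i
   resolves: if b_i lies in X but not in Y and no leaf separates X from Y, then each of a_i, c_i, d_i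
   is within distance one of a leaf in Y, such leaves lie in X (distance 0), and the three are
   distinct, so |X| >= 4.  Conversely, let Z = {b_(i-1), b_(i+1)}.  Every neighbour of a leaf of
   the star T_i other than b_i is adjacent to Z, and every neighbour of b_i is at distance two from
   Z.  Following a shortest path from s into the star shows that for two vertices u, v of T_i the
   sets Z + u and Z + v (or Z and Z + v when u = b_i) are at the same distance from every other
   vertex s, so a {3}-resolving set misses at most one vertex of each star. *)

section \<open>Distances along walks of a relation\<close>

definition walk_dist :: "('a \<Rightarrow> 'a \<Rightarrow> bool) \<Rightarrow> 'a \<Rightarrow> 'a \<Rightarrow> nat" where
  "walk_dist E u v = (LEAST k. (E ^^ k) u v)"

lemma walk_dist_le: "(E ^^ k) u v \<Longrightarrow> walk_dist E u v \<le> k"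
  unfolding walk_dist_def by (rule Least_le)

lemma walk_dist_walk: "E\<^sup>*\<^sup>* u v \<Longrightarrow> (E ^^ walk_dist E u v) u v"
  unfolding walk_dist_def rtranclp_power by (rule LeastI_ex)

lemma walk_dist_self: "walk_dist E u u = 0"
  using walk_dist_le[where k = 0 and E = E and u = u and v = u] by simp

lemma walk_dist_eq_0_iff: "E\<^sup>*\<^sup>* u v \<Longrightarrow> walk_dist E u v = 0 \<longleftrightarrow> u = v"
  using walk_dist_walk[of E u v] walk_dist_self[of E u] by auto

lemma walk_dist_le_1_iff: "E\<^sup>*\<^sup>* u v \<Longrightarrow> walk_dist E u v \<le> 1 \<longleftrightarrow> u = v \<or> E u v"
  using walk_dist_walk[of E u v] walk_dist_self[of E u] walk_dist_le[where k = 1 and E = E]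
  by (auto simp: le_Suc_eq)

lemma shortest_walk_last_step:
  assumes "E\<^sup>*\<^sup>* u v" "u \<noteq> v"
  obtains w m where "(E ^^ m) u w" "E w v" "walk_dist E u v = Suc m"
proof -
  obtain m where m: "walk_dist E u v = Suc m"
    using assms walk_dist_eq_0_iff not0_implies_Suc by metis
  then have "(E ^^ Suc m) u v" using walk_dist_walk[OF assms(1)] by simp
  then obtain w where "(E ^^ m) u w" "E w v" by (rule relpowp_Suc_E)
  with m show thesis using that by blast
qed

lemma Min_walk_dist_le_of_walk:
  assumes "finite T" "t \<in> T" "(E ^^ k) s t"
  shows "Min (walk_dist E s ` T) \<le> k"
proof -
  have "Min (walk_dist E s ` T) \<le> walk_dist E s t" using assms(1,2) by simp
  then show ?thesis using walk_dist_le[OF assms(3)] by (rule order_trans)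
qed

lemma Min_walk_dist_le_if_neighbours_near:
  assumes "E\<^sup>*\<^sup>* s v" "s \<noteq> v" "finite T"
    and near: "\<And>w. E w v \<Longrightarrow> \<exists>t\<in>T. t = w \<or> E w t"
  shows "Min (walk_dist E s ` T) \<le> walk_dist E s v"
proof -
  obtain w m where w: "(E ^^ m) s w" "E w v" "walk_dist E s v = Suc m"
    using shortest_walk_last_step[OF assms(1,2)] by blast
  obtain t where t: "t \<in> T" "t = w \<or> E w t" using near w(2) by blast
  have "(E ^^ Suc m) s t \<or> t = w" using w(1) t(2) by (auto intro: relpowp_Suc_I)
  then show ?thesis
    using Min_walk_dist_le_of_walk[OF assms(3) t(1)] w(1,3) le_SucI by metis
qed

text \<open>If a shortest walk from \<open>s\<close> enters \<open>v\<close> from \<open>u\<close>, its part up to \<open>u\<close> cannot enter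
  \<open>u\<close> from \<open>v\<close>, so the second hypothesis applies to it.\<close>

lemma Min_walk_dist_le_if_neighbours_near_except:
  assumes "E\<^sup>*\<^sup>* s v" "s \<noteq> v" "s \<noteq> u" "finite T"
    and near_v: "\<And>w. E w v \<Longrightarrow> w \<noteq> u \<Longrightarrow> \<exists>t\<in>T. t = w \<or> E w t"
    and near_u: "\<And>w. E w u \<Longrightarrow> w \<noteq> v \<Longrightarrow> \<exists>t\<in>T. \<exists>z. E w z \<and> E z t"
  shows "Min (walk_dist E s ` T) \<le> walk_dist E s v"
proof -
  obtain w m where w: "(E ^^ m) s w" "E w v" "walk_dist E s v = Suc m"
    using shortest_walk_last_step[OF assms(1,2)] by blast
  show ?thesis
  proof (cases "w = u")
    case False
    then obtain t where t: "t \<in> T" "t = w \<or> E w t" using near_v w(2) by blast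
    have "(E ^^ Suc m) s t \<or> t = w" using w(1) t(2) by (auto intro: relpowp_Suc_I)
    then show ?thesis
      using Min_walk_dist_le_of_walk[OF assms(4) t(1)] w(1,3) le_SucI by metis
  next
    case True
    then have "E\<^sup>*\<^sup>* s u" using w(1) by (simp add: relpowp_imp_rtranclp)
    then obtain w' m' where w': "(E ^^ m') s w'" "E w' u" "walk_dist E s u = Suc m'"
      using assms(3) by (rule shortest_walk_last_step)
    have "Suc m' \<le> m" using walk_dist_le[OF w(1)] True w'(3) by simp
    have "w' \<noteq> v"
    proof
      assume "w' = v"
      then have "walk_dist E s v \<le> m'" using walk_dist_le[OF w'(1)] by simp
      then show False using w(3) \<open>Suc m' \<le> m\<close> by simp
    qed
    then obtain t z where t: "t \<in> T" "E w' z" "E z t" using near_u w'(2) by blast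
    have "(E ^^ Suc (Suc m')) s t" by (rule relpowp_Suc_I[OF relpowp_Suc_I[OF w'(1) t(2)] t(3)])
    then have "Min (walk_dist E s ` T) \<le> Suc (Suc m')" by (rule Min_walk_dist_le_of_walk[OF assms(4) t(1)])
    with \<open>Suc m' \<le> m\<close> show ?thesis using w(3) by simp
  qed
qed

lemma Min_walk_dist_insert_swap:
  assumes "E\<^sup>*\<^sup>* s u" "E\<^sup>*\<^sup>* s v" "s \<noteq> u" "s \<noteq> v" "finite Z" "Z \<noteq> {}"
    and "\<And>w. E w v \<Longrightarrow> \<exists>t\<in>insert u Z. t = w \<or> E w t"
    and "\<And>w. E w u \<Longrightarrow> \<exists>t\<in>insert v Z. t = w \<or> E w t"
  shows "Min (walk_dist E s ` insert u Z) = Min (walk_dist E s ` insert v Z)"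
proof -
  have "Min (walk_dist E s ` insert u Z) \<le> walk_dist E s v"
    using assms by (intro Min_walk_dist_le_if_neighbours_near) auto
  moreover have "Min (walk_dist E s ` insert v Z) \<le> walk_dist E s u"
    using assms by (intro Min_walk_dist_le_if_neighbours_near) auto
  moreover have "Min (walk_dist E s ` insert w Z) = min (walk_dist E s w) (Min (walk_dist E s ` Z))"
    for w using assms(5,6) by simp
  moreover have "min a m = min b m" if "min a m \<le> b" "min b m \<le> a" for a b m :: nat
    using that by (auto simp: min_def split: if_splits)
  ultimately show ?thesis by simp
qed

lemma Min_walk_dist_insert_absorb:
  assumes "E\<^sup>*\<^sup>* s v" "s \<noteq> v" "s \<noteq> u" "finite Z" "Z \<noteq> {}"
    and "\<And>w. E w v \<Longrightarrow> w \<noteq> u \<Longrightarrow> \<exists>t\<in>Z. t = w \<or> E w t"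
    and "\<And>w. E w u \<Longrightarrow> w \<noteq> v \<Longrightarrow> \<exists>t\<in>Z. \<exists>z. E w z \<and> E z t"
  shows "Min (walk_dist E s ` insert v Z) = Min (walk_dist E s ` Z)"
proof -
  have "Min (walk_dist E s ` Z) \<le> walk_dist E s v"
    using assms by (intro Min_walk_dist_le_if_neighbours_near_except[where u = u]) auto
  then show ?thesis using assms(4,5) by (simp add: min.absorb2)
qed

section \<open>Adjacency and distances in the flower snark\<close>

lemma fs_dist_eq_walk_dist: "fs_dist n = walk_dist (fs_adj n)"
  by (simp add: fun_eq_iff fs_dist_def walk_dist_def)

lemma fs_setdist_eq_Min: "fs_setdist n s X = Min (walk_dist (fs_adj n) s ` X)"
  by (simp add: fs_setdist_def fs_dist_eq_walk_dist)

lemma finite_fs_verts: "finite (fs_verts n)"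
  by (simp add: fs_verts_def)

lemma card_fs_verts: "card (fs_verts n) = 4 * n"
  by (simp add: fs_verts_def)

lemma fs_adj_sym: "fs_adj n u v \<longleftrightarrow> fs_adj n v u"
  unfolding fs_adj_def by blast

lemma fs_adj_in_verts: "fs_adj n u v \<Longrightarrow> u \<in> fs_verts n \<and> v \<in> fs_verts n"
  unfolding fs_adj_def fs_arc_def fs_verts_def by auto

lemma fs_adj_centre_iff:
  "fs_adj n w (i,1) \<longleftrightarrow> i < n \<and> (w = (i,0) \<or> w = (i,2) \<or> w = (i,3))"
  unfolding fs_adj_def fs_arc_def by auto

lemma fs_adj_leaf_centre: "i < n \<Longrightarrow> k \<in> {0, 2, 3} \<Longrightarrow> fs_adj n (i,k) (i,1)"
  unfolding fs_adj_def fs_arc_def by auto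

lemma fs_leaf_neighbour_in_flanking_stars:
  assumes "fs_adj n w (i,k)" "k \<noteq> 1" "w \<noteq> (i,1)"
  shows "w \<in> {(i + 1) mod n, (i + n - 1) mod n} \<times> {0, 2, 3}"
proof -
  have "fst w < n" "snd w \<in> {0, 2, 3}"
    and "fst w = (i + 1) mod n \<or> (fst w + 1) mod n = i"
    using assms unfolding fs_adj_def fs_arc_def by auto
  moreover have "j = (i + n - 1) mod n" if "j < n" "(j + 1) mod n = i" for j
  proof (cases "j + 1 < n")
    case False
    with that have "n = Suc j" by simp
    with that show ?thesis by simp
  next
    case True
    with that have "i + n - 1 = j + n" by simp
    then show ?thesis using that(1) by simp
  qed
  ultimately show ?thesis by (cases w) auto
qed

text \<open>Passing from star n-1 to star 0, the rim cycle c_0 ... c_(n-1) d_0 ... d_(n-1) swaps c and d,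
  i.e. \<open>k \<in> {2, 3}\<close> becomes \<open>5 - k\<close>.\<close>

lemma fs_arc_succ:
  assumes "i < n" "k \<noteq> 1" "k < 4"
  shows "fs_arc n (i,k) ((i + 1) mod n, if k = 0 \<or> i + 1 < n then k else 5 - k)"
proof -
  have "k = 0 \<or> k = 2 \<or> k = 3" using assms(2,3) by auto
  moreover have "i + 1 < n \<or> i + 1 = n" using assms(1) by auto
  ultimately show ?thesis
    using assms(1) unfolding fs_arc_def by (elim disjE) (rule exI[of _ i]; simp)+
qed

lemma fs_leaves_share_no_neighbour:
  assumes "3 \<le> n" "k \<noteq> k'" "k \<noteq> 1" "k' \<noteq> 1" "w \<noteq> (i,1)"
    "w = (i,k) \<or> fs_adj n w (i,k)" "w = (i,k') \<or> fs_adj n w (i,k')"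
  shows False
  using assms unfolding fs_adj_def fs_arc_def by auto

lemma fs_reaches_origin:
  assumes "u \<in> fs_verts n"
  shows "(fs_adj n)\<^sup>*\<^sup>* u (0,0)"
proof -
  obtain i k where u: "u = (i,k)" "i < n" "k < 4" using assms by (auto simp: fs_verts_def)
  have "(fs_adj n)\<^sup>*\<^sup>* (j,0) (0,0)" if "j < n" for j
    using that
  proof (induction j)
    case (Suc j)
    then have "fs_arc n (j,0) (Suc j, 0)" unfolding fs_arc_def by auto
    then have "fs_adj n (Suc j, 0) (j,0)" by (simp add: fs_adj_def)
    with Suc show ?case by (simp add: converse_rtranclp_into_rtranclp)
  qed simp
  moreover have "fs_adj n (i,1) (i,0)"
    using fs_adj_leaf_centre[OF u(2)] fs_adj_sym by blast
  moreover have "k = 1 \<or> fs_adj n (i,k) (i,1)"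
  proof -
    have "k \<in> {0, 1, 2, 3}" using u(3) by auto
    then show ?thesis using fs_adj_leaf_centre[OF u(2)] by auto
  qed
  ultimately show ?thesis
    using u by (metis converse_rtranclp_into_rtranclp)
qed

lemma fs_verts_reachable:
  assumes "u \<in> fs_verts n" "v \<in> fs_verts n"
  shows "(fs_adj n)\<^sup>*\<^sup>* u v"
proof -
  have "symp (fs_adj n)" by (auto intro: sympI simp: fs_adj_sym)
  then have "(fs_adj n)\<^sup>*\<^sup>* (0,0) v"
    using fs_reaches_origin[OF assms(2)] by (blast dest: symp_rtranclp sympD)
  with fs_reaches_origin[OF assms(1)] show ?thesis by (rule rtranclp_trans)
qed

lemma fs_setdist_eq_0_iff:
  assumes "s \<in> fs_verts n" "X \<subseteq> fs_verts n" "X \<noteq> {}"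
  shows "fs_setdist n s X = 0 \<longleftrightarrow> s \<in> X"
proof -
  have reach: "(fs_adj n)\<^sup>*\<^sup>* s x" if "x \<in> X" for x
    using assms(1,2) that fs_verts_reachable by blast
  have "finite X" using assms(2) finite_fs_verts by (rule finite_subset)
  then have "fs_setdist n s X = 0 \<longleftrightarrow> (\<exists>x\<in>X. walk_dist (fs_adj n) s x = 0)"
    using assms(3) by (simp add: fs_setdist_eq_Min Min_le_iff flip: le_zero_eq)
  also have "\<dots> \<longleftrightarrow> s \<in> X"
    using walk_dist_eq_0_iff[OF reach] by auto
  finally show ?thesis .
qed

lemma fs_setdist_le_1_iff:
  assumes "s \<in> fs_verts n" "X \<subseteq> fs_verts n" "X \<noteq> {}"
  shows "fs_setdist n s X \<le> 1 \<longleftrightarrow> (\<exists>x\<in>X. x = s \<or> fs_adj n s x)"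
proof -
  have reach: "(fs_adj n)\<^sup>*\<^sup>* s x" if "x \<in> X" for x
    using assms(1,2) that fs_verts_reachable by blast
  have "finite X" using assms(2) finite_fs_verts by (rule finite_subset)
  then have "fs_setdist n s X \<le> 1 \<longleftrightarrow> (\<exists>x\<in>X. walk_dist (fs_adj n) s x \<le> 1)"
    using assms(3) by (simp add: fs_setdist_eq_Min Min_le_iff)
  also have "\<dots> \<longleftrightarrow> (\<exists>x\<in>X. x = s \<or> fs_adj n s x)"
    using walk_dist_le_1_iff[OF reach] by auto
  finally show ?thesis .
qed

section \<open>Upper bound: the leaves resolve\<close>

definition fs_leaves :: "nat \<Rightarrow> (nat \<times> nat) set" where
  "fs_leaves n = {0..<n} \<times> {0, 2, 3}"

lemma card_fs_leaves: "card (fs_leaves n) = 3 * n"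
  by (simp add: fs_leaves_def card_cartesian_product)

lemma fs_leaves_subset_verts: "fs_leaves n \<subseteq> fs_verts n"
  by (auto simp: fs_leaves_def fs_verts_def)

lemma fs_leaf_neighbour_is_leaf:
  assumes "fs_adj n w (i,k)" "k \<noteq> 1" "w \<noteq> (i,1)"
  shows "w \<in> fs_leaves n"
proof -
  have "0 < n" using fs_adj_in_verts[OF assms(1)] by (simp add: fs_verts_def)
  then show ?thesis using fs_leaf_neighbour_in_flanking_stars[OF assms] by (auto simp: fs_leaves_def)
qed

lemma fs_leaves_separate:
  assumes "3 \<le> n" "X \<subseteq> fs_verts n" "Y \<subseteq> fs_verts n" "Y \<noteq> {}" "card X \<le> 3"
    and "x \<in> X" "x \<notin> Y"
  shows "\<exists>s\<in>fs_leaves n. fs_setdist n s X \<noteq> fs_setdist n s Y"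
proof (rule ccontr)
  assume "\<not> ?thesis"
  then have same: "fs_setdist n s X = fs_setdist n s Y" if "s \<in> fs_leaves n" for s
    using that by blast
  have "X \<noteq> {}" using assms(6) by blast
  have leaf_vert: "s \<in> fs_verts n" if "s \<in> fs_leaves n" for s
    using that fs_leaves_subset_verts by blast
  have zero_iff: "fs_setdist n s X = 0 \<longleftrightarrow> s \<in> X" "fs_setdist n s Y = 0 \<longleftrightarrow> s \<in> Y"
    if "s \<in> fs_leaves n" for s
    using fs_setdist_eq_0_iff leaf_vert[OF that] assms(2-4) \<open>X \<noteq> {}\<close> by blast+
  have leaf_in_X: "y \<in> X" if "y \<in> Y" "y \<in> fs_leaves n" for y
    using that zero_iff[OF that(2)] same[OF that(2)] by simp
  have "x \<notin> fs_leaves n"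
    using assms(6,7) zero_iff[of x] same[of x] by auto
  moreover obtain i k where "x = (i,k)" "i < n" "k \<in> {0, 1, 2, 3}"
    using assms(2,6) by (force simp: fs_verts_def)
  ultimately have x: "x = (i,1)" "i < n" by (auto simp: fs_leaves_def)
  have near: "\<exists>y\<in>X \<inter> fs_leaves n. y = (i,k) \<or> fs_adj n y (i,k)" if "k \<in> {0, 2, 3}" for k
  proof -
    have leaf: "(i,k) \<in> fs_leaves n" using that x(2) by (simp add: fs_leaves_def)
    have "fs_adj n (i,k) x" using fs_adj_leaf_centre that x by simp
    then have "fs_setdist n (i,k) X \<le> 1"
      using assms(2,6) \<open>X \<noteq> {}\<close> leaf_vert[OF leaf] fs_setdist_le_1_iff by blast
    then have "fs_setdist n (i,k) Y \<le> 1" using same[OF leaf] by simp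
    then obtain y where y: "y \<in> Y" "y = (i,k) \<or> fs_adj n (i,k) y"
      using assms(3,4) leaf_vert[OF leaf] fs_setdist_le_1_iff by blast
    have "y \<noteq> (i,1)" using y(1) assms(7) x(1) by blast
    then have "y \<in> fs_leaves n"
      using y(2) leaf that fs_leaf_neighbour_is_leaf[of n y i k] fs_adj_sym by auto
    with y show ?thesis using leaf_in_X fs_adj_sym by blast
  qed
  obtain y0 where y0: "y0 \<in> X \<inter> fs_leaves n" "y0 = (i,0) \<or> fs_adj n y0 (i,0)"
    using near[of 0] by blast
  obtain y2 where y2: "y2 \<in> X \<inter> fs_leaves n" "y2 = (i,2) \<or> fs_adj n y2 (i,2)"
    using near[of 2] by blast
  obtain y3 where y3: "y3 \<in> X \<inter> fs_leaves n" "y3 = (i,3) \<or> fs_adj n y3 (i,3)"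
    using near[of 3] by blast
  have "y0 \<noteq> (i,1)" "y2 \<noteq> (i,1)" "y3 \<noteq> (i,1)"
    using y0(1) y2(1) y3(1) by (auto simp: fs_leaves_def)
  then have "y0 \<noteq> y2" "y0 \<noteq> y3" "y2 \<noteq> y3"
    using fs_leaves_share_no_neighbour[OF assms(1), of 0 2 y0 i]
      fs_leaves_share_no_neighbour[OF assms(1), of 0 3 y0 i]
      fs_leaves_share_no_neighbour[OF assms(1), of 2 3 y2 i] y0(2) y2(2) y3(2)
    by auto
  moreover have "x \<notin> {y0, y2, y3}" using \<open>x \<notin> fs_leaves n\<close> y0(1) y2(1) y3(1) by blast
  ultimately have "card {x, y0, y2, y3} = 4" by simp
  moreover have "card {x, y0, y2, y3} \<le> card X"
    using assms(2,6) y0(1) y2(1) y3(1) finite_fs_verts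
    by (intro card_mono) (auto intro: finite_subset)
  ultimately show False using assms(5) by simp
qed

lemma three_resolving_fs_leaves:
  assumes "3 \<le> n"
  shows "three_resolving n (fs_leaves n)"
  unfolding three_resolving_def
proof (intro conjI allI impI)
  fix X Y
  assume XY: "X \<subseteq> fs_verts n" "Y \<subseteq> fs_verts n" "X \<noteq> {}" "Y \<noteq> {}"
    "card X \<le> 3" "card Y \<le> 3" "X \<noteq> Y"
  show "\<exists>s\<in>fs_leaves n. fs_setdist n s X \<noteq> fs_setdist n s Y"
  proof (cases "X \<subseteq> Y")
    case True
    then obtain y where "y \<in> Y" "y \<notin> X" using XY(7) by blast
    then show ?thesis using fs_leaves_separate[OF assms XY(2,1,3,6)] by metis
  next
    case False
    then obtain x where "x \<in> X" "x \<notin> Y" by blast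
    then show ?thesis using fs_leaves_separate[OF assms XY(1,2,4,5)] by blast
  qed
qed (rule fs_leaves_subset_verts)

section \<open>Lower bound: a resolving set misses at most one vertex per star\<close>

definition fs_flanking_centres :: "nat \<Rightarrow> nat \<Rightarrow> (nat \<times> nat) set" where
  "fs_flanking_centres n i = {((i + 1) mod n, 1), ((i + n - 1) mod n, 1)}"

lemma fs_flanking_centres_subset_verts: "0 < n \<Longrightarrow> fs_flanking_centres n i \<subseteq> fs_verts n"
  by (simp add: fs_flanking_centres_def fs_verts_def)

lemma card_insert_fs_flanking_centres: "card (insert v (fs_flanking_centres n i)) \<le> 3"
proof -
  have "card (fs_flanking_centres n i) \<le> 2"
    by (simp add: fs_flanking_centres_def card_insert_if)
  then show ?thesis by (simp add: fs_flanking_centres_def card_insert_if)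
qed

lemma fs_flanking_centres_disjoint_star:
  assumes "2 \<le> n" "i < n"
  shows "(i,k) \<notin> fs_flanking_centres n i"
proof -
  have "(i + 1) mod n \<noteq> i"
  proof (cases "i + 1 < n")
    case False
    then have "i + 1 = n" using assms(2) by simp
    then have "(i + 1) mod n = 0" by simp
    then show ?thesis using assms False by linarith
  qed simp
  moreover have "(i + n - 1) mod n \<noteq> i"
  proof (cases i)
    case 0
    then show ?thesis using assms(1) by simp
  next
    case (Suc j)
    then have "(i + n - 1) mod n = j" using assms(2) by simp
    then show ?thesis using Suc by simp
  qed
  ultimately show ?thesis by (simp add: fs_flanking_centres_def)
qed

lemma fs_leaf_neighbour_near_flanking:
  assumes "fs_adj n w (i,k)" "k \<noteq> 1" "w \<noteq> (i,1)"
  shows "\<exists>t\<in>fs_flanking_centres n i. fs_adj n w t"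
proof -
  have "0 < n" using fs_adj_in_verts[OF assms(1)] by (simp add: fs_verts_def)
  then show ?thesis
    using fs_leaf_neighbour_in_flanking_stars[OF assms] fs_adj_leaf_centre by (auto simp: fs_flanking_centres_def)
qed

lemma fs_centre_neighbour_near_flanking:
  assumes "fs_adj n w (i,1)"
  shows "\<exists>t\<in>fs_flanking_centres n i. \<exists>z. fs_adj n w z \<and> fs_adj n z t"
proof -
  obtain k where w: "w = (i,k)" "k \<in> {0, 2, 3}" and "i < n"
    using assms fs_adj_centre_iff[of n w i] by auto
  define k' where "k' = (if k = 0 \<or> i + 1 < n then k else 5 - k)"
  have "fs_arc n (i,k) ((i + 1) mod n, k')"
    unfolding k'_def using w(2) \<open>i < n\<close> by (intro fs_arc_succ) auto
  moreover have "fs_adj n ((i + 1) mod n, k') ((i + 1) mod n, 1)"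
    using w(2) \<open>i < n\<close> by (intro fs_adj_leaf_centre) (auto simp: k'_def)
  ultimately show ?thesis using w(1) by (auto simp: fs_adj_def fs_flanking_centres_def)
qed

lemma fs_leaf_pair_unresolved:
  assumes "i < n" "k \<in> {0, 2, 3}" "k' \<in> {0, 2, 3}"
    and "s \<in> fs_verts n" "s \<noteq> (i,k)" "s \<noteq> (i,k')"
  shows "fs_setdist n s (insert (i,k) (fs_flanking_centres n i))
       = fs_setdist n s (insert (i,k') (fs_flanking_centres n i))"
  unfolding fs_setdist_eq_Min
proof (rule Min_walk_dist_insert_swap)
  have "(i,k) \<in> fs_verts n" "(i,k') \<in> fs_verts n" using assms(1-3) by (auto simp: fs_verts_def)
  then show "(fs_adj n)\<^sup>*\<^sup>* s (i,k)" "(fs_adj n)\<^sup>*\<^sup>* s (i,k')"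
    using assms(4) fs_verts_reachable by blast+
  have near: "\<exists>t\<in>insert (i,l) (fs_flanking_centres n i). t = w \<or> fs_adj n w t"
    if "l \<in> {0, 2, 3}" "l' \<in> {0, 2, 3}" "fs_adj n w (i,l')" for l l' w
  proof (cases "w = (i,1)")
    case True
    then show ?thesis using fs_adj_leaf_centre[OF assms(1) that(1)] fs_adj_sym by blast
  next
    case False
    then show ?thesis using fs_leaf_neighbour_near_flanking[OF that(3) _ False] that(2) by auto
  qed
  show "\<exists>t\<in>insert (i,k) (fs_flanking_centres n i). t = w \<or> fs_adj n w t" if "fs_adj n w (i,k')" for w
    using near[OF assms(2,3) that] .
  show "\<exists>t\<in>insert (i,k') (fs_flanking_centres n i). t = w \<or> fs_adj n w t" if "fs_adj n w (i,k)" for w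
    using near[OF assms(3,2) that] .
qed (use assms in \<open>auto simp: fs_flanking_centres_def\<close>)

lemma fs_leaf_centre_unresolved:
  assumes "i < n" "k \<in> {0, 2, 3}" "s \<in> fs_verts n" "s \<noteq> (i,k)" "s \<noteq> (i,1)"
  shows "fs_setdist n s (insert (i,k) (fs_flanking_centres n i)) = fs_setdist n s (fs_flanking_centres n i)"
  unfolding fs_setdist_eq_Min
proof (rule Min_walk_dist_insert_absorb[where u = "(i,1)"])
  have "(i,k) \<in> fs_verts n" using assms(1,2) by (auto simp: fs_verts_def)
  then show "(fs_adj n)\<^sup>*\<^sup>* s (i,k)" using assms(3) fs_verts_reachable by blast
  show "\<exists>t\<in>fs_flanking_centres n i. t = w \<or> fs_adj n w t"
    if "fs_adj n w (i,k)" "w \<noteq> (i,1)" for w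
    using that assms(2) fs_leaf_neighbour_near_flanking by fastforce
  show "\<exists>t\<in>fs_flanking_centres n i. \<exists>z. fs_adj n w z \<and> fs_adj n z t"
    if "fs_adj n w (i,1)" for w
    using that by (rule fs_centre_neighbour_near_flanking)
qed (use assms in \<open>auto simp: fs_flanking_centres_def\<close>)

lemma three_resolving_subset_verts: "three_resolving n S \<Longrightarrow> S \<subseteq> fs_verts n"
  unfolding three_resolving_def by (rule conjunct1)

lemma three_resolving_setdist_inj:
  assumes "three_resolving n S" "X \<subseteq> fs_verts n" "Y \<subseteq> fs_verts n" "X \<noteq> {}" "Y \<noteq> {}"
    "card X \<le> 3" "card Y \<le> 3" "\<And>s. s \<in> S \<Longrightarrow> fs_setdist n s X = fs_setdist n s Y"
  shows "X = Y"
  using assms unfolding three_resolving_def by metis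

lemma three_resolving_star_leaf_mem:
  assumes "3 \<le> n" "three_resolving n S" "i < n" "k < 4" "(i,k) \<notin> S"
    and "k' \<in> {0, 2, 3}" "k' \<noteq> k"
  shows "(i,k') \<in> S"
proof (rule ccontr)
  assume "(i,k') \<notin> S"
  define Z where "Z = fs_flanking_centres n i"
  have Z: "Z \<subseteq> fs_verts n" "Z \<noteq> {}" "(i,k) \<notin> Z" "(i,k') \<notin> Z"
    using assms(1) fs_flanking_centres_subset_verts[of n i]
      fs_flanking_centres_disjoint_star[OF _ assms(3), of k] fs_flanking_centres_disjoint_star[OF _ assms(3), of k']
    unfolding Z_def by (simp_all add: fs_flanking_centres_def)
  have card_Z: "card (insert v Z) \<le> 3" for v
    unfolding Z_def by (rule card_insert_fs_flanking_centres)
  have "finite Z" by (simp add: Z_def fs_flanking_centres_def)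
  then have "card Z \<le> 3" using card_Z card_insert_le order_trans by metis
  have S: "s \<in> fs_verts n" "s \<noteq> (i,k)" "s \<noteq> (i,k')" if "s \<in> S" for s
    using that assms(5) \<open>(i,k') \<notin> S\<close> three_resolving_subset_verts[OF assms(2)] by auto
  have verts: "(i,k) \<in> fs_verts n" "(i,k') \<in> fs_verts n"
    using assms(3,4,6) by (auto simp: fs_verts_def)
  show False
  proof (cases "k = 1")
    case True
    have "insert (i,k') Z = Z"
    proof (rule three_resolving_setdist_inj[OF assms(2)])
      show "fs_setdist n s (insert (i,k') Z) = fs_setdist n s Z" if "s \<in> S" for s
        using fs_leaf_centre_unresolved[OF assms(3,6) S(1,3)[OF that]] S(2)[OF that] True
        by (simp add: Z_def)
    qed (use Z verts card_Z \<open>card Z \<le> 3\<close> in blast)+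
    then show False using Z(4) by blast
  next
    case False
    then have "k \<in> {0, 2, 3}" using assms(4) by auto
    have "insert (i,k) Z = insert (i,k') Z"
    proof (rule three_resolving_setdist_inj[OF assms(2)])
      show "fs_setdist n s (insert (i,k) Z) = fs_setdist n s (insert (i,k') Z)" if "s \<in> S" for s
        using fs_leaf_pair_unresolved[OF assms(3) \<open>k \<in> {0, 2, 3}\<close> assms(6) S[OF that]]
        by (simp add: Z_def)
    qed (use Z verts card_Z \<open>card Z \<le> 3\<close> in blast)+
    then have "(i,k) \<in> insert (i,k') Z" by (metis insertI1)
    then show False using Z(3) assms(7) by simp
  qed
qed

lemma three_resolving_misses_at_most_one_per_star:
  assumes "3 \<le> n" "three_resolving n S" "i < n" "k < 4" "k' < 4" "(i,k) \<notin> S" "(i,k') \<notin> S"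
  shows "k = k'"
proof (rule ccontr)
  assume "k \<noteq> k'"
  then consider "k' \<in> {0, 2, 3}" | "k \<in> {0, 2, 3}" using assms(4,5) by fastforce
  then show False
  proof cases
    case 1
    then show False using three_resolving_star_leaf_mem[OF assms(1-4,6) 1] \<open>k \<noteq> k'\<close> assms(7) by blast
  next
    case 2
    then show False using three_resolving_star_leaf_mem[OF assms(1-3,5,7) 2] \<open>k \<noteq> k'\<close> assms(6) by blast
  qed
qed

lemma card_three_resolving_ge:
  assumes "3 \<le> n" "three_resolving n S"
  shows "3 * n \<le> card S"
proof -
  let ?M = "fs_verts n - S"
  have "S \<subseteq> fs_verts n" using assms(2) by (rule three_resolving_subset_verts)
  have "inj_on fst ?M"
  proof (rule inj_onI)
    fix u v assume "u \<in> ?M" "v \<in> ?M" "fst u = fst v"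
    then obtain i k k' where "u = (i,k)" "v = (i,k')" "i < n" "k < 4" "k' < 4" "(i,k) \<notin> S" "(i,k') \<notin> S"
      by (cases u, cases v) (auto simp: fs_verts_def)
    then show "u = v" using three_resolving_misses_at_most_one_per_star[OF assms] by simp
  qed
  moreover have "fst ` ?M \<subseteq> {0..<n}" by (auto simp: fs_verts_def)
  ultimately have "card ?M \<le> n" using card_inj_on_le[of fst ?M "{0..<n}"] by simp
  moreover have "card ?M = 4 * n - card S"
    using card_Diff_subset[OF finite_subset[OF \<open>S \<subseteq> fs_verts n\<close> finite_fs_verts]
        \<open>S \<subseteq> fs_verts n\<close>] card_fs_verts by simp
  moreover have "card S \<le> 4 * n"
    using card_mono[OF finite_fs_verts \<open>S \<subseteq> fs_verts n\<close>] card_fs_verts by simp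
  ultimately show ?thesis by linarith
qed

theorem mainTheorem15:
  fixes n :: nat
  assumes "odd n" and "n \<ge> 5"
  shows "beta3 n = 3 * n"
proof -
  \<comment> \<open>only \<open>n \<ge> 3\<close> is needed\<close>
  have n: "3 \<le> n" using assms(2) by simp
  show ?thesis
    unfolding beta3_def
  proof (rule Least_equality)
    show "\<exists>S. three_resolving n S \<and> card S = 3 * n"
      using three_resolving_fs_leaves[OF n] card_fs_leaves by blast
    show "3 * n \<le> k" if "\<exists>S. three_resolving n S \<and> card S = k" for k
      using that card_three_resolving_ge[OF n] by blast
  qed
qed

end
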